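(* In the setting described in the context, there is a one-to-one correspondence between complex structures $J$ on $L$ (as defined in the context) and symmetric bilinear forms $\Omega:Q\times Q\to\mathbb{C}$ with positive definite real part, given by assigning to $J$ the form $$\Omega_J(\phi,\phi')=g_J(j_J(\phi),j_J(\phi'))-\mathrm{i}\,[j_J(\phi),\phi'],\qquad\phi,\phi'\in Q.$$ That is, $J\mapsto\Omega_J$ is a bijection from the set of complex structures on $L$ onto the set of symmetric bilinear forms $Q\times Q\to\mathbb{C}$ with positive definite real part.
   Context: $L$ is a finite-dimensional real vector space and $[\cdot,\cdot]:L\times L\to\mathbb{R}$ is a bilinear form such that $\omega(\xi,\xi')=\frac12[\xi,\xi']-\frac12[\xi',\xi]$ is non-degenerate. Set $M=\{\tau\in L:[\xi,\tau]=0\ \forall\xi\in L\}$ and $N=\{\tau\in L:[\tau,\xi]=0\ \forall\xi\in L\}$, and assume $L=M\oplus N$. Let $Q=L/M$ with quotient map $q:L\to Q$; $[\cdot,\cdot]$ descends to $L\times Q\to\mathbb{R}$. A complex structure on $L$ is a linear map $J:L\to L$ with $J^2=-\mathrm{id}$, $\omega(J\xi,J\tau)=\omega(\xi,\tau)$ for all $\xi,\tau$, and such that $g_J(\tau,\xi):=2\omega(\tau,J\xi)$ is positive definite. For such $J$, $j_J:Q\to L$ is the unique linear map with $q\circ j_J=\mathrm{id}_Q$ and $j_J(Q)\subseteq JM$. *)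

theory Defs
  imports "HOL-Analysis.Analysis"
begin

text \<open>L is modelled as a type of class euclidean_space (a finite-dimensional real
vector space; the inner product is never used). The bilinear form [.,.] is B.\<close>

definition omg :: "('a \<Rightarrow> 'a \<Rightarrow> real) \<Rightarrow> 'a \<Rightarrow> 'a \<Rightarrow> real" where
  "omg B x y = B x y / 2 - B y x / 2"

definition Mset :: "('a \<Rightarrow> 'a \<Rightarrow> real) \<Rightarrow> 'a set" where
  "Mset B = {\<tau>. \<forall>\<xi>. B \<xi> \<tau> = 0}"

definition Nset :: "('a \<Rightarrow> 'a \<Rightarrow> real) \<Rightarrow> 'a set" where
  "Nset B = {\<tau>. \<forall>\<xi>. B \<tau> \<xi> = 0}"

definition gJ :: "('a \<Rightarrow> 'a \<Rightarrow> real) \<Rightarrow> ('a \<Rightarrow> 'a) \<Rightarrow> 'a \<Rightarrow> 'a \<Rightarrow> real" where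
  "gJ B J \<tau> \<xi> = 2 * omg B \<tau> (J \<xi>)"

definition complex_structure :: "('a::real_vector \<Rightarrow> 'a \<Rightarrow> real) \<Rightarrow> ('a \<Rightarrow> 'a) \<Rightarrow> bool" where
  "complex_structure B J \<longleftrightarrow> linear J \<and> (\<forall>\<xi>. J (J \<xi>) = - \<xi>)
     \<and> (\<forall>\<xi> \<tau>. omg B (J \<xi>) (J \<tau>) = omg B \<xi> \<tau>)
     \<and> (\<forall>\<tau>. \<tau> \<noteq> 0 \<longrightarrow> gJ B J \<tau> \<tau> > 0)"

text \<open>The quotient Q = L/M is represented through lifts: an element of Q is given by
a representative in L, q x = q y iff x - y \<in> M. jJ B J x is j_J(q x), i.e. the unique
element of J M lying in the class of x.\<close>

definition jJ :: "('a::real_vector \<Rightarrow> 'a \<Rightarrow> real) \<Rightarrow> ('a \<Rightarrow> 'a) \<Rightarrow> 'a \<Rightarrow> 'a" where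
  "jJ B J x = (THE \<eta>. \<eta> \<in> J ` Mset B \<and> x - \<eta> \<in> Mset B)"

definition OmegaJ :: "('a::real_vector \<Rightarrow> 'a \<Rightarrow> real) \<Rightarrow> ('a \<Rightarrow> 'a) \<Rightarrow> 'a \<Rightarrow> 'a \<Rightarrow> complex" where
  "OmegaJ B J x y = complex_of_real (gJ B J (jJ B J x) (jJ B J y))
                    - \<i> * complex_of_real (B (jJ B J x) y)"

text \<open>Symmetric real-bilinear forms Q x Q \<rightarrow> C with positive definite real part,
represented as bilinear forms on L that vanish whenever an argument lies in M
(i.e. that factor through q x q).\<close>

definition admissible_form :: "('a::real_vector \<Rightarrow> 'a \<Rightarrow> real) \<Rightarrow> ('a \<Rightarrow> 'a \<Rightarrow> complex) \<Rightarrow> bool" where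
  "admissible_form B \<Omega> \<longleftrightarrow> bilinear \<Omega>
     \<and> (\<forall>m\<in>Mset B. \<forall>x. \<Omega> m x = 0 \<and> \<Omega> x m = 0)
     \<and> (\<forall>x y. \<Omega> x y = \<Omega> y x)
     \<and> (\<forall>x. x \<notin> Mset B \<longrightarrow> Re (\<Omega> x x) > 0)"

end

theory Submission
  imports Defs
begin

text \<open>M and N are complementary Lagrangian subspaces for the non-degenerate omega, so
  dim M = dim N = dim L / 2. Given J, the subspaces J M and M are complementary, so j_J
  is well defined and Omega_J is admissible. Im Omega_J = -B(j_J \<cdot>, \<cdot>) determines
  j_J (two candidates differ by a vector of M that is B-null on the left, i.e. lies in N),
  then Re Omega_J determines g_J on J M, hence omega(J k, \<cdot>) for k in J M, hence J by
  non-degeneracy. Conversely, write R + i T for a given admissible Omega and let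
  a, c : N \<rightarrow> M be the B-duals of -T and R, i.e. B(a x, \<cdot>) = -T(x, \<cdot>) and
  B(c x, \<cdot>) = R(x, \<cdot>) (dual_T and dual_R below); c is an isomorphism since R is
  positive on N. Every vector is uniquely x + a x + c y with x, y in N, and
  J(x + a x + c y) = y + a y - c x is the complex structure with Omega_J = Omega; its
  j_J is x + a x + c y \<mapsto> x + a x.\<close>

lemma inner_adjoint_functional:
  fixes \<phi> :: "'a::euclidean_space \<Rightarrow> real"
  assumes "linear \<phi>"
  shows "adjoint \<phi> 1 \<bullet> y = \<phi> y"
  using adjoint_clauses(2)[OF assms, of 1 y] by simp

lemma nondegenerate_bilinear_flat:
  fixes \<beta> :: "'a::euclidean_space \<Rightarrow> 'a \<Rightarrow> real"
  assumes bil: "bilinear \<beta>" and nondeg: "\<forall>x. (\<forall>y. \<beta> x y = 0) \<longrightarrow> x = 0"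
  obtains H where "linear H" "bij H" "\<And>x y. H x \<bullet> y = \<beta> x y"
proof
  define H where "H x = adjoint (\<beta> x) 1" for x
  have lin_\<beta>: "linear (\<beta> x)" for x
    using bil by (simp add: bilinear_def)
  show H: "H x \<bullet> y = \<beta> x y" for x y
    unfolding H_def by (rule inner_adjoint_functional[OF lin_\<beta>])
  show lin: "linear H"
    by (rule linearI) (simp_all add: vector_eq_rdot[symmetric] inner_add_left H
        bilinear_ladd[OF bil] bilinear_lmul[OF bil])
  have "inj H"
    unfolding linear_injective_0[OF lin] using nondeg H by (metis inner_zero_left)
  then show "bij H"
    using linear_injective_imp_surjective[OF lin] by (simp add: bij_def)
qed

lemma nondegenerate_bilinear_represents:
  fixes \<beta> :: "'a::euclidean_space \<Rightarrow> 'a \<Rightarrow> real"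
  assumes "bilinear \<beta>" "\<forall>x. (\<forall>y. \<beta> x y = 0) \<longrightarrow> x = 0" "linear \<phi>"
  obtains x where "\<And>y. \<beta> x y = \<phi> y"
proof -
  obtain H where H: "bij H" "\<And>x y. H x \<bullet> y = \<beta> x y"
    using nondegenerate_bilinear_flat[OF assms(1,2)] by metis
  then obtain x where "H x = adjoint \<phi> 1"
    by (metis bij_pointE)
  then show thesis
    using that H(2) inner_adjoint_functional[OF assms(3)] by metis
qed

lemma isotropic_subspace_dim_le:
  fixes \<beta> :: "'a::euclidean_space \<Rightarrow> 'a \<Rightarrow> real"
  assumes "bilinear \<beta>" "\<forall>x. (\<forall>y. \<beta> x y = 0) \<longrightarrow> x = 0"
    and "subspace S" "\<forall>x\<in>S. \<forall>y\<in>S. \<beta> x y = 0"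
  shows "2 * dim S \<le> DIM('a)"
proof -
  obtain H where H: "linear H" "bij H" "\<And>x y. H x \<bullet> y = \<beta> x y"
    using nondegenerate_bilinear_flat[OF assms(1,2)] by metis
  define S' where "S' = {y. \<forall>x\<in>S. orthogonal x y}"
  have "dim S' + dim S = DIM('a)"
    using dim_subspace_orthogonal_to_vectors[OF assms(3) subspace_UNIV] by (simp add: S'_def)
  moreover have "H ` S \<subseteq> S'"
    using H(3) assms(4) by (auto simp: S'_def orthogonal_def inner_commute)
  then have "dim (H ` S) \<le> dim S'"
    by (rule dim_subset)
  moreover have "dim (H ` S) = dim S"
    using dim_image_eq[OF H(1)] H(2) by (metis bij_is_inj inj_on_subset subset_UNIV)
  ultimately show ?thesis by linarith
qed

lemma subspace_complement_by_dim:
  fixes S T :: "'a::euclidean_space set"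
  assumes "subspace S" "subspace T" "S \<inter> T = {0}" "dim S + dim T = DIM('a)"
  shows "\<exists>s\<in>S. \<exists>t\<in>T. x = s + t"
proof -
  have "dim {s + t |s t. s \<in> S \<and> t \<in> T} = DIM('a)"
    using dim_sums_Int[OF assms(1,2)] assms(3,4) by simp
  then have "{s + t |s t. s \<in> S \<and> t \<in> T} = UNIV"
    using subspace_dim_equal[OF subspace_sums[OF assms(1,2)] subspace_UNIV] by simp
  then show ?thesis by blast
qed

lemma bilinear_compose:
  assumes "bilinear f" "linear g" "linear h" "linear k"
  shows "bilinear (\<lambda>x y. k (f (g x) (h y)))"
  using assms unfolding bilinear_def
  by (auto intro!: linear_compose[of _ k, unfolded o_def] linear_compose[of g, unfolded o_def]
      linear_compose[of h, unfolded o_def])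

lemma bilinear_omg:
  assumes "bilinear B"
  shows "bilinear (omg B)"
  unfolding bilinear_def omg_def
  by (auto intro!: linearI simp: bilinear_ladd[OF assms] bilinear_lmul[OF assms]
      bilinear_radd[OF assms] bilinear_rmul[OF assms] field_simps)

lemma bilinear_complex_combination:
  fixes f g :: "'a::real_vector \<Rightarrow> 'a \<Rightarrow> real"
  assumes "bilinear f" "bilinear g"
  shows "bilinear (\<lambda>x y. complex_of_real (f x y) - \<i> * complex_of_real (g x y))"
  unfolding bilinear_def
  by (auto intro!: linearI simp: bilinear_ladd[OF assms(1)] bilinear_lmul[OF assms(1)]
      bilinear_radd[OF assms(1)] bilinear_rmul[OF assms(1)] bilinear_ladd[OF assms(2)]
      bilinear_lmul[OF assms(2)] bilinear_radd[OF assms(2)] bilinear_rmul[OF assms(2)]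
      scaleR_conv_of_real algebra_simps)

locale lagrangian_split =
  fixes B :: "'a::euclidean_space \<Rightarrow> 'a \<Rightarrow> real"
  assumes bilinear_B: "bilinear B"
    and omg_nondegenerate: "\<forall>\<xi>. (\<forall>\<xi>'. omg B \<xi> \<xi>' = 0) \<longrightarrow> \<xi> = 0"
    and M_inter_N: "Mset B \<inter> Nset B = {0}"
    and M_plus_N: "\<forall>x. \<exists>m\<in>Mset B. \<exists>n\<in>Nset B. x = m + n"
begin

abbreviation "M \<equiv> Mset B"
abbreviation "N \<equiv> Nset B"

lemma B_right_M: "m \<in> M \<Longrightarrow> B x m = 0"
  by (simp add: Mset_def)

lemma B_left_N: "n \<in> N \<Longrightarrow> B n x = 0"
  by (simp add: Nset_def)

lemma subspace_M: "subspace M"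
  unfolding subspace_def Mset_def
  by (auto simp: bilinear_radd[OF bilinear_B] bilinear_rmul[OF bilinear_B]
      bilinear_rzero[OF bilinear_B])

lemma subspace_N: "subspace N"
  unfolding subspace_def Nset_def
  by (auto simp: bilinear_ladd[OF bilinear_B] bilinear_lmul[OF bilinear_B]
      bilinear_lzero[OF bilinear_B])

lemma in_M_and_N_eq_0: "x \<in> M \<Longrightarrow> x \<in> N \<Longrightarrow> x = 0"
  using M_inter_N by blast

lemma M_eq_by_B:
  assumes "m \<in> M" "m' \<in> M" "\<And>y. B m y = B m' y"
  shows "m = m'"
proof -
  have "m - m' \<in> N"
    using assms(3) by (simp add: Nset_def bilinear_lsub[OF bilinear_B])
  moreover have "m - m' \<in> M"
    using assms(1,2) subspace_M by (simp add: subspace_diff)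
  ultimately have "m - m' = 0"
    by (rule in_M_and_N_eq_0[rotated])
  then show ?thesis
    by simp
qed

lemma bilinear_omg_B: "bilinear (omg B)"
  by (rule bilinear_omg[OF bilinear_B])

lemma omg_M: "\<forall>x\<in>M. \<forall>y\<in>M. omg B x y = 0"
  by (simp add: omg_def B_right_M)

lemma omg_N: "\<forall>x\<in>N. \<forall>y\<in>N. omg B x y = 0"
  by (simp add: omg_def B_left_N)

lemma dim_M_add_dim_N: "dim M + dim N = DIM('a)"
proof -
  have "{m + n |m n. m \<in> M \<and> n \<in> N} = UNIV"
    using M_plus_N by blast
  then show ?thesis
    using dim_sums_Int[OF subspace_M subspace_N] M_inter_N by simp
qed

lemma dim_M_add_dim_M: "dim M + dim M = DIM('a)"
  and dim_N_eq_dim_M: "dim N = dim M"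
  using isotropic_subspace_dim_le[OF bilinear_omg_B omg_nondegenerate subspace_M omg_M]
    isotropic_subspace_dim_le[OF bilinear_omg_B omg_nondegenerate subspace_N omg_N]
    dim_M_add_dim_N by linarith+

lemma B_represents_functional_vanishing_on_M:
  assumes "linear \<phi>" "\<And>m. m \<in> M \<Longrightarrow> \<phi> m = 0"
  obtains m where "m \<in> M" "\<And>y. B m y = \<phi> y"
proof -
  obtain x where x: "\<And>y. omg B x y = \<phi> y"
    using nondegenerate_bilinear_represents[OF bilinear_omg_B omg_nondegenerate assms(1)] by blast
  obtain m n where mn: "m \<in> M" "n \<in> N" "x = m + n"
    using M_plus_N by blast
  have omg_x: "omg B x y = (B m y - B y n) / 2" for y
    using mn by (simp add: omg_def bilinear_ladd[OF bilinear_B] bilinear_radd[OF bilinear_B]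
        B_right_M B_left_N)
  have "B y n = 0" for y
  proof -
    obtain m' n' where "m' \<in> M" "n' \<in> N" "y = m' + n'"
      using M_plus_N by blast
    moreover have "B m' n = 0"
      using x[of m'] omg_x[of m'] assms(2) \<open>m' \<in> M\<close> \<open>m \<in> M\<close> by (simp add: B_right_M)
    ultimately show ?thesis
      by (simp add: bilinear_ladd[OF bilinear_B] B_left_N)
  qed
  then have "\<phi> y = B ((1/2) *\<^sub>R m) y" for y
    using x[of y] omg_x[of y] by (simp add: bilinear_lmul[OF bilinear_B])
  moreover have "(1/2) *\<^sub>R m \<in> M"
    using mn(1) subspace_M by (simp add: subspace_mul)
  ultimately show thesis
    using that by metis
qed

definition B_dual :: "('a \<Rightarrow> real) \<Rightarrow> 'a" where
  "B_dual \<phi> = (SOME m. m \<in> M \<and> (\<forall>y. B m y = \<phi> y))"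

lemma B_dual:
  assumes "linear \<phi>" "\<And>m. m \<in> M \<Longrightarrow> \<phi> m = 0"
  shows "B_dual \<phi> \<in> M" "B (B_dual \<phi>) y = \<phi> y"
proof -
  have "\<exists>m. m \<in> M \<and> (\<forall>y. B m y = \<phi> y)"
    using B_represents_functional_vanishing_on_M[OF assms] by metis
  then have "B_dual \<phi> \<in> M \<and> (\<forall>y. B (B_dual \<phi>) y = \<phi> y)"
    unfolding B_dual_def by (rule someI_ex)
  then show "B_dual \<phi> \<in> M" "B (B_dual \<phi>) y = \<phi> y"
    by auto
qed

end

locale compatible_complex_structure =
  lagrangian_split B for B :: "'a::euclidean_space \<Rightarrow> 'a \<Rightarrow> real" +
  fixes J :: "'a \<Rightarrow> 'a"
  assumes complex_structure_J: "complex_structure B J"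
begin

abbreviation "j \<equiv> jJ B J"

lemma linear_J: "linear J"
  and J_J: "J (J x) = - x"
  and omg_J_J: "omg B (J x) (J y) = omg B x y"
  and gJ_pos: "t \<noteq> 0 \<Longrightarrow> gJ B J t t > 0"
  using complex_structure_J by (auto simp: complex_structure_def)

lemma omg_J_left: "omg B (J x) y = - omg B x (J y)"
  using omg_J_J[of x "J y"] by (simp add: J_J bilinear_rneg[OF bilinear_omg_B])

lemma gJ_sym: "gJ B J x y = gJ B J y x"
  unfolding gJ_def using omg_J_left[of y x] by (simp add: omg_def)

lemma bilinear_gJ: "bilinear (gJ B J)"
  unfolding gJ_def[abs_def]
  using bilinear_compose[OF bilinear_omg_B linear_id linear_J, of "\<lambda>r. 2 * r"]
  by (simp add: linear_scale_self id_def)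

lemma subspace_J_M: "subspace (J ` M)"
  by (rule linear_subspace_image[OF linear_J subspace_M])

lemma J_M_inter_M: "J ` M \<inter> M = {0}"
proof -
  have "u = 0" if "u \<in> M" "J u \<in> M" for u
  proof (rule ccontr)
    assume "u \<noteq> 0"
    then have "gJ B J u u > 0"
      by (rule gJ_pos)
    moreover have "gJ B J u u = 0"
      using omg_M that by (simp add: gJ_def)
    ultimately show False
      by simp
  qed
  then show ?thesis
    using subspace_M linear_0[OF linear_J] by (auto simp: subspace_0)
qed

lemma J_M_plus_M: "\<exists>k\<in>J ` M. \<exists>m\<in>M. x = k + m"
proof (rule subspace_complement_by_dim[OF subspace_J_M subspace_M J_M_inter_M])
  have "inj J"
    by (metis J_J injI neg_equal_iff_equal)
  then have "dim (J ` M) = dim M"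
    using dim_image_eq[OF linear_J] by (metis inj_on_subset subset_UNIV)
  then show "dim (J ` M) + dim M = DIM('a)"
    using dim_M_add_dim_M by simp
qed

lemma jJ_eq:
  assumes "k \<in> J ` M" "x - k \<in> M"
  shows "j x = k"
  unfolding jJ_def
proof (rule the_equality)
  fix k' assume k': "k' \<in> J ` M \<and> x - k' \<in> M"
  have "k' - k \<in> J ` M"
    using subspace_diff[OF subspace_J_M] assms k' by blast
  moreover have "k' - k = (x - k) - (x - k')"
    by simp
  then have "k' - k \<in> M"
    using subspace_diff[OF subspace_M] assms k' by metis
  ultimately have "k' - k = 0"
    using J_M_inter_M by blast
  then show "k' = k"
    by simp
qed (use assms in auto)

lemma jJ_mem: "j x \<in> J ` M" and jJ_diff_mem: "x - j x \<in> M"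
proof -
  obtain k m where "k \<in> J ` M" "m \<in> M" "x = k + m"
    using J_M_plus_M by blast
  then have "j x = k"
    by (intro jJ_eq) auto
  then show "j x \<in> J ` M" "x - j x \<in> M"
    using \<open>k \<in> J ` M\<close> \<open>m \<in> M\<close> \<open>x = k + m\<close> by auto
qed

lemma linear_jJ: "linear j"
proof (rule linearI)
  fix x y
  show "j (x + y) = j x + j y"
  proof (rule jJ_eq)
    show "j x + j y \<in> J ` M"
      by (rule subspace_add[OF subspace_J_M jJ_mem jJ_mem])
    have "x + y - (j x + j y) = (x - j x) + (y - j y)"
      by simp
    then show "x + y - (j x + j y) \<in> M"
      using subspace_add[OF subspace_M jJ_diff_mem jJ_diff_mem] by metis
  qed
next
  fix r x
  show "j (r *\<^sub>R x) = r *\<^sub>R j x"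
  proof (rule jJ_eq)
    show "r *\<^sub>R j x \<in> J ` M"
      by (rule subspace_mul[OF subspace_J_M jJ_mem])
    have "r *\<^sub>R x - r *\<^sub>R j x = r *\<^sub>R (x - j x)"
      by (simp add: scaleR_right_diff_distrib)
    then show "r *\<^sub>R x - r *\<^sub>R j x \<in> M"
      using subspace_mul[OF subspace_M jJ_diff_mem] by metis
  qed
qed

lemma jJ_M: "m \<in> M \<Longrightarrow> j m = 0"
  using subspace_0[OF subspace_J_M] by (intro jJ_eq) auto

lemma jJ_J_M: "k \<in> J ` M \<Longrightarrow> j k = k"
  using subspace_0[OF subspace_M] by (intro jJ_eq) auto

lemma J_jJ_mem: "J (j x) \<in> M"
  using jJ_mem[of x] J_J subspace_neg[OF subspace_M] by auto

text \<open>On J M the form B is symmetric, because omega is J-invariant and M is isotropic.\<close>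

lemma B_jJ_sym: "B (j x) y = B (j y) x"
proof -
  obtain u v where uv: "u \<in> M" "v \<in> M" "j x = J u" "j y = J v"
    using jJ_mem by blast
  have "B (J u) (J v) = B (J v) (J u)"
    using omg_J_J[of u v] omg_M uv(1,2) by (simp add: omg_def)
  moreover have "B (j z) w = B (j z) (j w)" for z w
    using B_right_M[OF jJ_diff_mem[of w], of "j z"] by (simp add: bilinear_rsub[OF bilinear_B])
  ultimately show ?thesis
    using uv by metis
qed

lemma admissible_form_OmegaJ: "admissible_form B (OmegaJ B J)"
  unfolding admissible_form_def
proof (intro conjI ballI allI impI)
  show "bilinear (OmegaJ B J)"
    unfolding OmegaJ_def[abs_def]
    using bilinear_compose[OF bilinear_gJ linear_jJ linear_jJ linear_id]
      bilinear_compose[OF bilinear_B linear_jJ linear_id linear_id]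
    by (intro bilinear_complex_combination) (simp_all add: id_def)
next
  fix m x assume "m \<in> M"
  then show "OmegaJ B J m x = 0" "OmegaJ B J x m = 0"
    by (simp_all add: OmegaJ_def jJ_M B_right_M bilinear_lzero[OF bilinear_gJ]
        bilinear_rzero[OF bilinear_gJ] bilinear_lzero[OF bilinear_B])
next
  fix x y
  show "OmegaJ B J x y = OmegaJ B J y x"
    by (simp add: OmegaJ_def gJ_sym[of "j x"] B_jJ_sym[of x])
next
  fix x assume "x \<notin> M"
  then have "j x \<noteq> 0"
    using jJ_diff_mem[of x] by auto
  then show "Re (OmegaJ B J x x) > 0"
    using gJ_pos by (simp add: OmegaJ_def)
qed

lemma omg_J_jJ: "omg B (J (j z)) w = - gJ B J (j w) (j z) / 2"
proof -
  have "omg B (J (j z)) (w - j w) = 0"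
    using omg_M J_jJ_mem jJ_diff_mem by blast
  then have "omg B (J (j z)) w = omg B (J (j z)) (j w)"
    by (simp add: bilinear_rsub[OF bilinear_omg_B])
  then show ?thesis
    by (simp add: gJ_def omg_def)
qed
end

context lagrangian_split
begin

lemma OmegaJ_injective:
  assumes J1: "complex_structure B J1" and J2: "complex_structure B J2"
    and eq: "OmegaJ B J1 = OmegaJ B J2"
  shows "J1 = J2"
proof -
  interpret J1: compatible_complex_structure B J1
    using J1 by unfold_locales
  interpret J2: compatible_complex_structure B J2
    using J2 by unfold_locales
  have Im_eq: "B (jJ B J1 x) y = B (jJ B J2 x) y" for x y
    using arg_cong[OF fun_cong[OF fun_cong[OF eq, of x], of y], of Im] by (simp add: OmegaJ_def)
  have Re_eq: "gJ B J1 (jJ B J1 x) (jJ B J1 y) = gJ B J2 (jJ B J2 x) (jJ B J2 y)" for x y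
    using arg_cong[OF fun_cong[OF fun_cong[OF eq, of x], of y], of Re] by (simp add: OmegaJ_def)
  have j_eq: "jJ B J1 x = jJ B J2 x" for x
  proof -
    have "jJ B J1 x - jJ B J2 x \<in> N"
      using Im_eq by (simp add: Nset_def bilinear_lsub[OF bilinear_B])
    moreover have "jJ B J1 x - jJ B J2 x = (x - jJ B J2 x) - (x - jJ B J1 x)"
      by simp
    then have "jJ B J1 x - jJ B J2 x \<in> M"
      using subspace_diff[OF subspace_M J2.jJ_diff_mem J1.jJ_diff_mem] by metis
    ultimately show ?thesis
      using in_M_and_N_eq_0 by fastforce
  qed
  have on_range_jJ: "J1 (jJ B J1 z) = J2 (jJ B J1 z)" for z
  proof -
    have "omg B (J1 (jJ B J1 z) - J2 (jJ B J1 z)) w = 0" for w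
      using J1.omg_J_jJ[of z w] J2.omg_J_jJ[of z w] Re_eq[of w z]
      by (simp add: j_eq bilinear_lsub[OF bilinear_omg_B])
    then have "J1 (jJ B J1 z) - J2 (jJ B J1 z) = 0"
      using omg_nondegenerate by blast
    then show ?thesis
      by simp
  qed
  have on_M: "J1 m = J2 m" if "m \<in> M" for m
  proof -
    have "J1 m \<in> J1 ` M"
      using that by blast
    then have "J2 (J1 m) = - m"
      using on_range_jJ[of "J1 m"] J1.J_J by (simp add: J1.jJ_J_M)
    then have "J2 m = - J2 (J2 (J1 m))"
      using linear_neg[OF J2.linear_J] by simp
    then show ?thesis
      by (simp add: J2.J_J)
  qed
  show ?thesis
  proof
    fix x
    have "x = jJ B J1 x + (x - jJ B J1 x)"
      by simp
    then show "J1 x = J2 x"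
      using on_range_jJ[of x] on_M[OF J1.jJ_diff_mem]
      by (metis linear_add[OF J1.linear_J] linear_add[OF J2.linear_J])
  qed
qed

definition proj_M :: "'a \<Rightarrow> 'a" where
  "proj_M x = (THE m. m \<in> M \<and> x - m \<in> N)"

definition proj_N :: "'a \<Rightarrow> 'a" where
  "proj_N x = x - proj_M x"

lemma proj_M_eq: "m \<in> M \<Longrightarrow> n \<in> N \<Longrightarrow> proj_M (m + n) = m"
  unfolding proj_M_def
proof (rule the_equality)
  fix m' assume m': "m \<in> M" "n \<in> N" "m' \<in> M \<and> m + n - m' \<in> N"
  have "m - m' \<in> M"
    using m' subspace_diff[OF subspace_M] by blast
  moreover have "m - m' = (m + n - m') - n"
    by simp
  then have "m - m' \<in> N"
    using m' subspace_diff[OF subspace_N] by metis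
  ultimately show "m' = m"
    using in_M_and_N_eq_0 by fastforce
qed simp

lemma proj_N_eq: "m \<in> M \<Longrightarrow> n \<in> N \<Longrightarrow> proj_N (m + n) = n"
  by (simp add: proj_N_def proj_M_eq)

lemma proj_M_mem: "proj_M x \<in> M" and proj_N_mem: "proj_N x \<in> N"
  and proj_M_add_proj_N: "proj_M x + proj_N x = x"
proof -
  obtain m n where "m \<in> M" "n \<in> N" "x = m + n"
    using M_plus_N by blast
  then show "proj_M x \<in> M" "proj_N x \<in> N" "proj_M x + proj_N x = x"
    by (simp_all add: proj_M_eq proj_N_eq)
qed

lemma linear_proj_M: "linear proj_M"
proof (rule linearI)
  fix x y
  have "proj_M ((proj_M x + proj_M y) + (proj_N x + proj_N y)) = proj_M x + proj_M y"
    by (intro proj_M_eq subspace_add[OF subspace_M] subspace_add[OF subspace_N]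
        proj_M_mem proj_N_mem)
  then show "proj_M (x + y) = proj_M x + proj_M y"
    by (metis proj_M_add_proj_N add.assoc add.left_commute)
next
  fix r x
  have "proj_M (r *\<^sub>R proj_M x + r *\<^sub>R proj_N x) = r *\<^sub>R proj_M x"
    by (intro proj_M_eq subspace_mul[OF subspace_M] subspace_mul[OF subspace_N]
        proj_M_mem proj_N_mem)
  then show "proj_M (r *\<^sub>R x) = r *\<^sub>R proj_M x"
    by (metis proj_M_add_proj_N scaleR_right_distrib)
qed

lemma linear_proj_N: "linear proj_N"
  unfolding proj_N_def[abs_def] by (intro linear_compose_sub linear_ident linear_proj_M)

end

locale admissible_form_on_lagrangian_split =
  lagrangian_split B for B :: "'a::euclidean_space \<Rightarrow> 'a \<Rightarrow> real" +
  fixes \<Omega> :: "'a \<Rightarrow> 'a \<Rightarrow> complex"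
  assumes admissible_\<Omega>: "admissible_form B \<Omega>"
begin

definition R :: "'a \<Rightarrow> 'a \<Rightarrow> real" where "R x y = Re (\<Omega> x y)"
definition T :: "'a \<Rightarrow> 'a \<Rightarrow> real" where "T x y = Im (\<Omega> x y)"

lemma bilinear_\<Omega>: "bilinear \<Omega>"
  and \<Omega>_M: "m \<in> M \<Longrightarrow> \<Omega> m x = 0" "m \<in> M \<Longrightarrow> \<Omega> x m = 0"
  and \<Omega>_sym: "\<Omega> x y = \<Omega> y x"
  and Re_\<Omega>_pos: "x \<notin> M \<Longrightarrow> Re (\<Omega> x x) > 0"
  using admissible_\<Omega> by (auto simp: admissible_form_def)

lemma bilinear_R: "bilinear R" and bilinear_T: "bilinear T"
  unfolding R_def[abs_def] T_def[abs_def]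
  using bilinear_compose[OF bilinear_\<Omega> linear_id linear_id
      bounded_linear.linear[OF bounded_linear_Re]]
    bilinear_compose[OF bilinear_\<Omega> linear_id linear_id
      bounded_linear.linear[OF bounded_linear_Im]]
  by (simp_all add: id_def)

lemma R_sym: "R x y = R y x" and T_sym: "T x y = T y x"
  unfolding R_def T_def using \<Omega>_sym by auto

lemma R_M: "m \<in> M \<Longrightarrow> R m x = 0" "m \<in> M \<Longrightarrow> R x m = 0"
  and T_M: "m \<in> M \<Longrightarrow> T m x = 0" "m \<in> M \<Longrightarrow> T x m = 0"
  unfolding R_def T_def using \<Omega>_M by auto

lemma R_pos: "x \<notin> M \<Longrightarrow> R x x > 0"
  unfolding R_def using Re_\<Omega>_pos by auto

lemma R_nonneg: "R x x \<ge> 0"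
  using R_pos[of x] R_M[of x x] by (cases "x \<in> M") auto

lemma R_proj_N: "R x y = R (proj_N x) (proj_N y)"
  using proj_M_add_proj_N[of x] proj_M_add_proj_N[of y] proj_M_mem[of x] proj_M_mem[of y]
  by (metis add_0 bilinear_ladd[OF bilinear_R] bilinear_radd[OF bilinear_R] R_M)

lemma T_proj_N: "T x y = T (proj_N x) y"
  using proj_M_add_proj_N[of x] proj_M_mem[of x]
  by (metis add_0 bilinear_ladd[OF bilinear_T] T_M(1))

definition dual_T :: "'a \<Rightarrow> 'a" where "dual_T x = B_dual (\<lambda>y. - T x y)"
definition dual_R :: "'a \<Rightarrow> 'a" where "dual_R x = B_dual (R x)"

lemma dual_T_mem: "dual_T x \<in> M" and B_dual_T: "B (dual_T x) y = - T x y"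
  unfolding dual_T_def
  using bilinear_T T_M by (auto intro!: B_dual linear_compose_neg simp: bilinear_def)

lemma dual_R_mem: "dual_R x \<in> M" and B_dual_R: "B (dual_R x) y = R x y"
  unfolding dual_R_def
  using bilinear_R R_M by (auto intro!: B_dual simp: bilinear_def)

lemma linear_dual_T: "linear dual_T"
  by (intro linearI; rule M_eq_by_B)
    (simp_all add: dual_T_mem subspace_add[OF subspace_M] subspace_mul[OF subspace_M]
      B_dual_T bilinear_ladd[OF bilinear_B] bilinear_lmul[OF bilinear_B]
      bilinear_ladd[OF bilinear_T] bilinear_lmul[OF bilinear_T])

lemma linear_dual_R: "linear dual_R"
  by (intro linearI; rule M_eq_by_B)
    (simp_all add: dual_R_mem subspace_add[OF subspace_M] subspace_mul[OF subspace_M]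
      B_dual_R bilinear_ladd[OF bilinear_B] bilinear_lmul[OF bilinear_B]
      bilinear_ladd[OF bilinear_R] bilinear_lmul[OF bilinear_R])

lemma inj_on_dual_R: "inj_on dual_R N"
  unfolding linear_inj_on_iff_eq_0[OF linear_dual_R subspace_N]
proof (intro ballI impI)
  fix y assume "y \<in> N" "dual_R y = 0"
  then have "R y y = 0"
    using B_dual_R[of y y] by (simp add: bilinear_lzero[OF bilinear_B])
  then have "y \<in> M"
    using R_pos by force
  then show "y = 0"
    using \<open>y \<in> N\<close> in_M_and_N_eq_0 by blast
qed

lemma bij_betw_dual_R: "bij_betw dual_R N M"
proof -
  have "dim (dual_R ` N) = dim M"
    using dim_image_eq[OF linear_dual_R, of N] inj_on_dual_R subspace_N dim_N_eq_dim_M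
    by (simp add: span_eq_iff[THEN iffD2, OF subspace_N])
  then have "dual_R ` N = M"
    using dual_R_mem
    by (intro subspace_dim_equal linear_subspace_image[OF linear_dual_R subspace_N] subspace_M) auto
  then show ?thesis
    using inj_on_dual_R by (simp add: bij_betw_def)
qed

text \<open>Every z decomposes uniquely as lift x + dual_R y with x, y in N; in these
  coordinates the complex structure is the rotation (x, y) \<mapsto> (y, -x).\<close>

definition lift :: "'a \<Rightarrow> 'a" where "lift x = x + dual_T x"

definition coord :: "'a \<Rightarrow> 'a" where
  "coord z = inv_into N dual_R (proj_M z - dual_T (proj_N z))"

definition J_\<Omega> :: "'a \<Rightarrow> 'a" where "J_\<Omega> z = lift (coord z) - dual_R (proj_N z)"

lemma linear_lift: "linear lift"
  unfolding lift_def[abs_def] by (intro linear_compose_add linear_ident linear_dual_T)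

lemma coord_mem: "coord z \<in> N"
  and dual_R_coord: "dual_R (coord z) = proj_M z - dual_T (proj_N z)"
proof -
  have "proj_M z - dual_T (proj_N z) \<in> M"
    using subspace_diff[OF subspace_M proj_M_mem dual_T_mem] .
  then show "coord z \<in> N" "dual_R (coord z) = proj_M z - dual_T (proj_N z)"
    unfolding coord_def using bij_betw_dual_R
    by (auto intro: bij_betw_apply[OF bij_betw_inv_into] bij_betw_inv_into_right)
qed

lemma lift_coord_decomposition: "z = lift (proj_N z) + dual_R (coord z)"
  using dual_R_coord[of z] proj_M_add_proj_N[of z] by (simp add: lift_def algebra_simps)

lemma coords_lift:
  assumes "x \<in> N" "y \<in> N"
  shows "proj_N (lift x + dual_R y) = x" "coord (lift x + dual_R y) = y"
proof -
  have split: "lift x + dual_R y = (dual_T x + dual_R y) + x"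
    by (simp add: lift_def algebra_simps)
  have M_part: "dual_T x + dual_R y \<in> M"
    by (rule subspace_add[OF subspace_M dual_T_mem dual_R_mem])
  show proj_N: "proj_N (lift x + dual_R y) = x"
    unfolding split using proj_N_eq[OF M_part assms(1)] .
  have "proj_M (lift x + dual_R y) = dual_T x + dual_R y"
    unfolding split using proj_M_eq[OF M_part assms(1)] .
  then show "coord (lift x + dual_R y) = y"
    unfolding coord_def proj_N using bij_betw_imp_inj_on[OF bij_betw_dual_R] assms(2)
    by (simp add: inv_into_f_f)
qed

lemma J_\<Omega>_lift: "x \<in> N \<Longrightarrow> y \<in> N \<Longrightarrow> J_\<Omega> (lift x + dual_R y) = lift y - dual_R x"
  by (simp add: J_\<Omega>_def coords_lift)

lemma linear_coord: "linear coord"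
proof (rule linearI)
  fix x y
  show "coord (x + y) = coord x + coord y"
    by (rule inj_onD[OF inj_on_dual_R])
      (simp_all add: coord_mem subspace_add[OF subspace_N] dual_R_coord
        linear_add[OF linear_dual_R] linear_add[OF linear_proj_M] linear_add[OF linear_proj_N]
        linear_add[OF linear_dual_T])
next
  fix r x
  show "coord (r *\<^sub>R x) = r *\<^sub>R coord x"
    by (rule inj_onD[OF inj_on_dual_R])
      (simp_all add: coord_mem subspace_mul[OF subspace_N] dual_R_coord
        linear_scale[OF linear_dual_R] linear_scale[OF linear_proj_M]
        linear_scale[OF linear_proj_N] linear_scale[OF linear_dual_T] scaleR_right_diff_distrib)
qed

lemma linear_J_\<Omega>: "linear J_\<Omega>"
  unfolding J_\<Omega>_def[abs_def]
  by (intro linear_compose_sub linear_compose[OF linear_coord linear_lift, unfolded o_def]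
      linear_compose[OF linear_proj_N linear_dual_R, unfolded o_def])

lemma B_lift: "x \<in> N \<Longrightarrow> B (lift x + dual_R y) w = - T x w + R y w"
  by (simp add: lift_def bilinear_ladd[OF bilinear_B] B_left_N B_dual_T B_dual_R)

lemma omg_lift:
  assumes "x \<in> N" "x' \<in> N"
  shows "omg B (lift x + dual_R y) (lift x' + dual_R y') = (R y x' - R y' x) / 2"
proof -
  have "T u (lift v + dual_R w) = T u v" "R u (lift v + dual_R w) = R u v" for u v w
    by (simp_all add: lift_def bilinear_radd[OF bilinear_T] bilinear_radd[OF bilinear_R]
        T_M R_M dual_T_mem dual_R_mem)
  then show ?thesis
    unfolding omg_def B_lift[OF assms(1)] B_lift[OF assms(2)]
    by (simp add: T_sym[of x x'] field_simps)
qed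

lemma J_\<Omega>_J_\<Omega>: "J_\<Omega> (J_\<Omega> z) = - z"
proof -
  have "J_\<Omega> (J_\<Omega> z) = lift (- proj_N z) - dual_R (coord z)"
    using J_\<Omega>_lift[OF coord_mem subspace_neg[OF subspace_N proj_N_mem]]
    by (simp add: J_\<Omega>_def linear_neg[OF linear_dual_R])
  also have "\<dots> = - (lift (proj_N z) + dual_R (coord z))"
    by (simp add: linear_neg[OF linear_lift])
  finally show ?thesis
    using lift_coord_decomposition[of z] by simp
qed

lemma omg_decomposition: "omg B z w = (R (coord z) (proj_N w) - R (coord w) (proj_N z)) / 2"
  using omg_lift[where x="proj_N z" and y="coord z" and x'="proj_N w" and y'="coord w"]
  by (simp add: proj_N_mem flip: lift_coord_decomposition)

lemma J_\<Omega>_decomposition: "J_\<Omega> z = lift (coord z) + dual_R (- proj_N z)"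
  by (simp add: J_\<Omega>_def linear_neg[OF linear_dual_R])

lemma omg_J_\<Omega>_J_\<Omega>: "omg B (J_\<Omega> z) (J_\<Omega> w) = omg B z w"
proof -
  have "omg B (J_\<Omega> z) (J_\<Omega> w) = (R (- proj_N z) (coord w) - R (- proj_N w) (coord z)) / 2"
    unfolding J_\<Omega>_decomposition by (rule omg_lift[OF coord_mem coord_mem])
  then show ?thesis
    by (simp add: omg_decomposition bilinear_lneg[OF bilinear_R] R_sym[of "proj_N z"]
        R_sym[of "proj_N w"])
qed

lemma gJ_J_\<Omega>: "gJ B J_\<Omega> z z = R (coord z) (coord z) + R (proj_N z) (proj_N z)"
proof -
  have "omg B (lift (proj_N z) + dual_R (coord z)) (J_\<Omega> z)
      = (R (coord z) (coord z) - R (- proj_N z) (proj_N z)) / 2"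
    unfolding J_\<Omega>_decomposition by (rule omg_lift[OF proj_N_mem coord_mem])
  then have "omg B z (J_\<Omega> z) = (R (coord z) (coord z) + R (proj_N z) (proj_N z)) / 2"
    by (simp add: bilinear_lneg[OF bilinear_R] flip: lift_coord_decomposition)
  then show ?thesis
    by (simp add: gJ_def)
qed

lemma gJ_J_\<Omega>_pos:
  assumes "z \<noteq> 0"
  shows "gJ B J_\<Omega> z z > 0"
proof -
  have "coord z \<noteq> 0 \<or> proj_N z \<noteq> 0"
    using lift_coord_decomposition[of z] assms linear_0[OF linear_lift] linear_0[OF linear_dual_R]
    by auto
  then have "coord z \<notin> M \<or> proj_N z \<notin> M"
    using in_M_and_N_eq_0 coord_mem proj_N_mem by blast
  then show ?thesis
    unfolding gJ_J_\<Omega> using R_pos R_nonneg by (meson add_pos_nonneg add_nonneg_pos)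
qed

lemma complex_structure_J_\<Omega>: "complex_structure B J_\<Omega>"
  unfolding complex_structure_def
  using linear_J_\<Omega> J_\<Omega>_J_\<Omega> omg_J_\<Omega>_J_\<Omega> gJ_J_\<Omega>_pos by auto

lemma OmegaJ_J_\<Omega>: "OmegaJ B J_\<Omega> = \<Omega>"
proof -
  interpret J\<^sub>\<Omega>: compatible_complex_structure B J_\<Omega>
    using complex_structure_J_\<Omega> by unfold_locales
  have J_\<Omega>_dual_R: "J_\<Omega> (dual_R x) = lift x" if "x \<in> N" for x
    using J_\<Omega>_lift[OF subspace_0[OF subspace_N] that]
    by (simp add: linear_0[OF linear_lift] linear_0[OF linear_dual_R])
  have jJ_eq: "jJ B J_\<Omega> u = lift (proj_N u)" for u
  proof (rule J\<^sub>\<Omega>.jJ_eq)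
    show "lift (proj_N u) \<in> J_\<Omega> ` M"
      using J_\<Omega>_dual_R[OF proj_N_mem] dual_R_mem by (metis image_eqI)
    have "u - lift (proj_N u) = proj_M u - dual_T (proj_N u)"
      using proj_M_add_proj_N[of u] by (simp add: lift_def algebra_simps)
    then show "u - lift (proj_N u) \<in> M"
      using subspace_diff[OF subspace_M proj_M_mem dual_T_mem] by simp
  qed
  have "gJ B J_\<Omega> (jJ B J_\<Omega> u) (jJ B J_\<Omega> v) = R u v" for u v
  proof -
    have "J_\<Omega> (lift (proj_N v)) = dual_R (- proj_N v)"
      using J_\<Omega>_lift[OF proj_N_mem subspace_0[OF subspace_N], of v]
      by (simp add: linear_0[OF linear_lift] linear_0[OF linear_dual_R]
          linear_neg[OF linear_dual_R])
    then have "gJ B J_\<Omega> (jJ B J_\<Omega> u) (jJ B J_\<Omega> v) = R (proj_N v) (proj_N u)"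
      using omg_lift[OF proj_N_mem subspace_0[OF subspace_N], of u 0 "- proj_N v"]
      by (simp add: gJ_def jJ_eq linear_0[OF linear_lift] linear_0[OF linear_dual_R]
          bilinear_lneg[OF bilinear_R]
          bilinear_lzero[OF bilinear_R])
    then show ?thesis
      using R_proj_N[of u v] R_sym by simp
  qed
  moreover have "B (jJ B J_\<Omega> u) v = - T u v" for u v
    using B_lift[OF proj_N_mem, of u 0 v] T_proj_N[of u v]
    by (simp add: jJ_eq linear_0[OF linear_dual_R] bilinear_lzero[OF bilinear_R])
  ultimately show ?thesis
    by (intro ext) (simp add: OmegaJ_def complex_eq_iff R_def T_def)
qed

end

theorem proposition3p3:
  fixes B :: "'a::euclidean_space \<Rightarrow> 'a \<Rightarrow> real"
  assumes "bilinear B"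
    and "\<forall>\<xi>. (\<forall>\<xi>'. omg B \<xi> \<xi>' = 0) \<longrightarrow> \<xi> = 0"
    and "Mset B \<inter> Nset B = {0}"
    and "\<forall>x. \<exists>m\<in>Mset B. \<exists>n\<in>Nset B. x = m + n"
  shows "bij_betw (OmegaJ B) {J. complex_structure B J} {\<Omega>. admissible_form B \<Omega>}"
proof -
  interpret lagrangian_split B
    using assms by unfold_locales
  have "inj_on (OmegaJ B) {J. complex_structure B J}"
    by (rule inj_onI) (auto intro: OmegaJ_injective)
  moreover have "OmegaJ B J \<in> {\<Omega>. admissible_form B \<Omega>}" if "complex_structure B J" for J
  proof -
    interpret compatible_complex_structure B J
      using that by unfold_locales
    show ?thesis
      using admissible_form_OmegaJ by simp
  qed
  moreover have "\<Omega> \<in> OmegaJ B ` {J. complex_structure B J}" if "admissible_form B \<Omega>" for \<Omega>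
  proof -
    interpret admissible_form_on_lagrangian_split B \<Omega>
      using that by unfold_locales
    show ?thesis
      using complex_structure_J_\<Omega> OmegaJ_J_\<Omega> by (metis image_eqI mem_Collect_eq)
  qed
  ultimately show ?thesis
    unfolding bij_betw_def by blast
qed

end
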